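(* Let $k$ be a field, $V$ a finite dimensional $k$-vector space with basis $\{x_1,\dots,x_n\}$, and $F=\{f_i:V^{\otimes n_i}\to V^{\otimes m_i}\}_{i\in I}$ a family of linear maps ($n_i,m_i\in\mathbb{N}_0$). Let $A$ be a bialgebra and suppose $V$ is a left $A$-comodule with structure map $\rho_A:V\to A\otimes V$ such that every $f_i$ is $A$-colinear (where $V^{\otimes \ell}$ carries the tensor product comodule structure induced by the multiplication of $A$, and $V^{\otimes 0}=k$ the trivial comodule). Then there exists a unique bialgebra morphism $\pi:A(F)\to A$ such that $(\pi\otimes \mathrm{id}_V)\circ\rho=\rho_A$, where $\rho:V\to A(F)\otimes V$, $\rho(x_i)=\sum_j t_i^j\otimes x_j$.
   Context: $C$ is the coalgebra with basis $\{t_i^j\}_{i,j=1}^n$, $\Delta(t_i^j)=\sum_k t_i^k\otimes t_k^j$, $\epsilon(t_i^j)=\delta_i^j$; $TC$ is its tensor algebra with the induced bialgebra structure. For $I\in\{1,\dots,n\}^\ell$ write $x_I=x_{i_1}\otimes\cdots\otimes x_{i_\ell}$ and $t_I^J=t_{i_1}^{j_1}\cdots t_{i_\ell}^{j_\ell}$. For a linear map $f:V^{\otimes p}\to V^{\otimes q}$ with $f(x_I)=\sum_J f_I^Jx_J$, $\mathcal{I}_f$ is the two-sided ideal of $TC$ generated by the elements $\sum_{J} t_I^J f_J^K-\sum_J f_I^J t_J^K$ for all $I\in\{1,\dots,n\}^p$, $K\in\{1,\dots,n\}^q$ (first sum over $J\in\{1,\dots,n\}^p$, second over $J\in\{1,\dots,n\}^q$).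 Each $\mathcal{I}_f$ is a bi-ideal, and $A(F):=TC/\mathcal{I}_F$ with $\mathcal{I}_F=\sum_{i\in I}\mathcal{I}_{f_i}$ is a bialgebra; $V$ is an $A(F)$-comodule via $\rho(x_i)=\sum_j t_i^j\otimes x_j$ and all $f_i$ are $A(F)$-colinear. *)

theory Defs
  imports Main "HOL-Library.Poly_Mapping"
begin

text \<open>Tensor products A (x) A and A (x) A (x) A are realised in the standard way as the
  free k-vector space on pairs (triples) of carrier elements, modulo the subspace
  generated by the (multi)linearity relations.  Hence the comultiplication returns a
  representative in the free vector space, and all coalgebra axioms are stated up to
  this tensor equivalence.\<close>

declare [[typedef_overloaded]]

record ('k, 'a) bialg =
  b_carrier :: "'a set"
  b_zero :: 'a
  b_add :: "'a \<Rightarrow> 'a \<Rightarrow> 'a"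
  b_smult :: "'k \<Rightarrow> 'a \<Rightarrow> 'a"
  b_mult :: "'a \<Rightarrow> 'a \<Rightarrow> 'a"
  b_one :: 'a
  b_comult :: "'a \<Rightarrow> ('a \<times> 'a) \<Rightarrow>\<^sub>0 'k"
  b_counit :: "'a \<Rightarrow> 'k"

definition pm_smult :: "'k::comm_ring_1 \<Rightarrow> ('x \<Rightarrow>\<^sub>0 'k) \<Rightarrow> ('x \<Rightarrow>\<^sub>0 'k)" where
  "pm_smult c u = Poly_Mapping.map ((*) c) u"

definition vsum :: "('k, 'a, 'm) bialg_scheme \<Rightarrow> ('x \<Rightarrow> 'a) \<Rightarrow> 'x set \<Rightarrow> 'a" where
  "vsum A f S = Finite_Set.fold (\<lambda>x acc. b_add A (f x) acc) (b_zero A) S"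

inductive_set tnull2 :: "('k::field, 'a, 'm) bialg_scheme \<Rightarrow> (('a \<times> 'a) \<Rightarrow>\<^sub>0 'k) set"
  for A where
  z: "0 \<in> tnull2 A"
| add: "u \<in> tnull2 A \<Longrightarrow> v \<in> tnull2 A \<Longrightarrow> u + v \<in> tnull2 A"
| sm: "u \<in> tnull2 A \<Longrightarrow> pm_smult c u \<in> tnull2 A"
| ladd: "a \<in> b_carrier A \<Longrightarrow> a' \<in> b_carrier A \<Longrightarrow> b \<in> b_carrier A \<Longrightarrow>
     Poly_Mapping.single (b_add A a a', b) 1 - Poly_Mapping.single (a, b) 1
       - Poly_Mapping.single (a', b) 1 \<in> tnull2 A"
| radd: "a \<in> b_carrier A \<Longrightarrow> b \<in> b_carrier A \<Longrightarrow> b' \<in> b_carrier A \<Longrightarrow>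
     Poly_Mapping.single (a, b_add A b b') 1 - Poly_Mapping.single (a, b) 1
       - Poly_Mapping.single (a, b') 1 \<in> tnull2 A"
| lsm: "a \<in> b_carrier A \<Longrightarrow> b \<in> b_carrier A \<Longrightarrow>
     Poly_Mapping.single (b_smult A c a, b) 1 - Poly_Mapping.single (a, b) c \<in> tnull2 A"
| rsm: "a \<in> b_carrier A \<Longrightarrow> b \<in> b_carrier A \<Longrightarrow>
     Poly_Mapping.single (a, b_smult A c b) 1 - Poly_Mapping.single (a, b) c \<in> tnull2 A"

inductive_set tnull3 :: "('k::field, 'a, 'm) bialg_scheme \<Rightarrow> (('a \<times> 'a \<times> 'a) \<Rightarrow>\<^sub>0 'k) set"
  for A where
  z: "0 \<in> tnull3 A"
| add: "u \<in> tnull3 A \<Longrightarrow> v \<in> tnull3 A \<Longrightarrow> u + v \<in> tnull3 A"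
| sm: "u \<in> tnull3 A \<Longrightarrow> pm_smult c u \<in> tnull3 A"
| add1: "a \<in> b_carrier A \<Longrightarrow> a' \<in> b_carrier A \<Longrightarrow> b \<in> b_carrier A \<Longrightarrow> d \<in> b_carrier A \<Longrightarrow>
     Poly_Mapping.single (b_add A a a', b, d) 1 - Poly_Mapping.single (a, b, d) 1
       - Poly_Mapping.single (a', b, d) 1 \<in> tnull3 A"
| add2: "a \<in> b_carrier A \<Longrightarrow> b \<in> b_carrier A \<Longrightarrow> b' \<in> b_carrier A \<Longrightarrow> d \<in> b_carrier A \<Longrightarrow>
     Poly_Mapping.single (a, b_add A b b', d) 1 - Poly_Mapping.single (a, b, d) 1
       - Poly_Mapping.single (a, b', d) 1 \<in> tnull3 A"
| add3: "a \<in> b_carrier A \<Longrightarrow> b \<in> b_carrier A \<Longrightarrow> d \<in> b_carrier A \<Longrightarrow> d' \<in> b_carrier A \<Longrightarrow>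
     Poly_Mapping.single (a, b, b_add A d d') 1 - Poly_Mapping.single (a, b, d) 1
       - Poly_Mapping.single (a, b, d') 1 \<in> tnull3 A"
| sm1: "a \<in> b_carrier A \<Longrightarrow> b \<in> b_carrier A \<Longrightarrow> d \<in> b_carrier A \<Longrightarrow>
     Poly_Mapping.single (b_smult A c a, b, d) 1 - Poly_Mapping.single (a, b, d) c \<in> tnull3 A"
| sm2: "a \<in> b_carrier A \<Longrightarrow> b \<in> b_carrier A \<Longrightarrow> d \<in> b_carrier A \<Longrightarrow>
     Poly_Mapping.single (a, b_smult A c b, d) 1 - Poly_Mapping.single (a, b, d) c \<in> tnull3 A"
| sm3: "a \<in> b_carrier A \<Longrightarrow> b \<in> b_carrier A \<Longrightarrow> d \<in> b_carrier A \<Longrightarrow>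
     Poly_Mapping.single (a, b, b_smult A c d) 1 - Poly_Mapping.single (a, b, d) c \<in> tnull3 A"

definition teq2 :: "('k::field, 'a, 'm) bialg_scheme \<Rightarrow> (('a \<times> 'a) \<Rightarrow>\<^sub>0 'k) \<Rightarrow> (('a \<times> 'a) \<Rightarrow>\<^sub>0 'k) \<Rightarrow> bool" where
  "teq2 A u v \<longleftrightarrow> u - v \<in> tnull2 A"

definition teq3 :: "('k::field, 'a, 'm) bialg_scheme \<Rightarrow> (('a \<times> 'a \<times> 'a) \<Rightarrow>\<^sub>0 'k) \<Rightarrow> (('a \<times> 'a \<times> 'a) \<Rightarrow>\<^sub>0 'k) \<Rightarrow> bool" where
  "teq3 A u v \<longleftrightarrow> u - v \<in> tnull3 A"

definition tmap2 :: "('a \<Rightarrow> 'c) \<Rightarrow> ('b \<Rightarrow> 'd) \<Rightarrow> (('a \<times> 'b) \<Rightarrow>\<^sub>0 'k::comm_monoid_add) \<Rightarrow> (('c \<times> 'd) \<Rightarrow>\<^sub>0 'k)" where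
  "tmap2 f g u = (\<Sum>p\<in>Poly_Mapping.keys u. Poly_Mapping.single (f (fst p), g (snd p)) (Poly_Mapping.lookup u p))"

definition tmult :: "('k::field, 'a, 'm) bialg_scheme \<Rightarrow> (('a \<times> 'a) \<Rightarrow>\<^sub>0 'k) \<Rightarrow> (('a \<times> 'a) \<Rightarrow>\<^sub>0 'k) \<Rightarrow> (('a \<times> 'a) \<Rightarrow>\<^sub>0 'k)" where
  "tmult A u v = (\<Sum>p\<in>Poly_Mapping.keys u. \<Sum>q\<in>Poly_Mapping.keys v.
      Poly_Mapping.single (b_mult A (fst p) (fst q), b_mult A (snd p) (snd q)) (Poly_Mapping.lookup u p * Poly_Mapping.lookup v q))"

definition coassL :: "('k::field, 'a, 'm) bialg_scheme \<Rightarrow> 'a \<Rightarrow> (('a \<times> 'a \<times> 'a) \<Rightarrow>\<^sub>0 'k)" where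
  "coassL A x = (\<Sum>p\<in>Poly_Mapping.keys (b_comult A x). \<Sum>q\<in>Poly_Mapping.keys (b_comult A (fst p)).
      Poly_Mapping.single (fst q, snd q, snd p) (Poly_Mapping.lookup (b_comult A x) p * Poly_Mapping.lookup (b_comult A (fst p)) q))"

definition coassR :: "('k::field, 'a, 'm) bialg_scheme \<Rightarrow> 'a \<Rightarrow> (('a \<times> 'a \<times> 'a) \<Rightarrow>\<^sub>0 'k)" where
  "coassR A x = (\<Sum>p\<in>Poly_Mapping.keys (b_comult A x). \<Sum>q\<in>Poly_Mapping.keys (b_comult A (snd p)).
      Poly_Mapping.single (fst p, fst q, snd q) (Poly_Mapping.lookup (b_comult A x) p * Poly_Mapping.lookup (b_comult A (snd p)) q))"

definition is_bialgebra :: "('k::field, 'a, 'm) bialg_scheme \<Rightarrow> bool" where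
  "is_bialgebra A \<longleftrightarrow>
    (let C = b_carrier A; add = b_add A; sm = b_smult A; mul = b_mult A;
         D = b_comult A; e = b_counit A in
     \<comment> \<open>vector space\<close>
     b_zero A \<in> C \<and>
     (\<forall>x\<in>C. \<forall>y\<in>C. add x y \<in> C) \<and>
     (\<forall>c. \<forall>x\<in>C. sm c x \<in> C) \<and>
     (\<forall>x\<in>C. \<forall>y\<in>C. \<forall>z\<in>C. add (add x y) z = add x (add y z)) \<and>
     (\<forall>x\<in>C. \<forall>y\<in>C. add x y = add y x) \<and>
     (\<forall>x\<in>C. add (b_zero A) x = x) \<and>
     (\<forall>x\<in>C. add x (sm (-1) x) = b_zero A) \<and>
     (\<forall>c. \<forall>x\<in>C. \<forall>y\<in>C. sm c (add x y) = add (sm c x) (sm c y)) \<and>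
     (\<forall>c d. \<forall>x\<in>C. sm (c + d) x = add (sm c x) (sm d x)) \<and>
     (\<forall>c d. \<forall>x\<in>C. sm c (sm d x) = sm (c * d) x) \<and>
     (\<forall>x\<in>C. sm 1 x = x) \<and>
     \<comment> \<open>associative unital algebra\<close>
     b_one A \<in> C \<and>
     (\<forall>x\<in>C. \<forall>y\<in>C. mul x y \<in> C) \<and>
     (\<forall>x\<in>C. \<forall>y\<in>C. \<forall>z\<in>C. mul (mul x y) z = mul x (mul y z)) \<and>
     (\<forall>x\<in>C. mul (b_one A) x = x \<and> mul x (b_one A) = x) \<and>
     (\<forall>x\<in>C. \<forall>y\<in>C. \<forall>z\<in>C. mul x (add y z) = add (mul x y) (mul x z)) \<and>
     (\<forall>x\<in>C. \<forall>y\<in>C. \<forall>z\<in>C. mul (add x y) z = add (mul x z) (mul y z)) \<and>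
     (\<forall>c. \<forall>x\<in>C. \<forall>y\<in>C. sm c (mul x y) = mul (sm c x) y \<and> sm c (mul x y) = mul x (sm c y)) \<and>
     \<comment> \<open>coalgebra\<close>
     (\<forall>x\<in>C. Poly_Mapping.keys (D x) \<subseteq> C \<times> C) \<and>
     (\<forall>x\<in>C. \<forall>y\<in>C. teq2 A (D (add x y)) (D x + D y)) \<and>
     (\<forall>c. \<forall>x\<in>C. teq2 A (D (sm c x)) (pm_smult c (D x))) \<and>
     (\<forall>x\<in>C. \<forall>y\<in>C. e (add x y) = e x + e y) \<and>
     (\<forall>c. \<forall>x\<in>C. e (sm c x) = c * e x) \<and>
     (\<forall>x\<in>C. teq3 A (coassL A x) (coassR A x)) \<and>
     (\<forall>x\<in>C. vsum A (\<lambda>p. sm (e (fst p) * Poly_Mapping.lookup (D x) p) (snd p)) (Poly_Mapping.keys (D x)) = x) \<and>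
     (\<forall>x\<in>C. vsum A (\<lambda>p. sm (e (snd p) * Poly_Mapping.lookup (D x) p) (fst p)) (Poly_Mapping.keys (D x)) = x) \<and>
     \<comment> \<open>compatibility: Delta and epsilon are algebra maps\<close>
     (\<forall>x\<in>C. \<forall>y\<in>C. teq2 A (D (mul x y)) (tmult A (D x) (D y))) \<and>
     teq2 A (D (b_one A)) (Poly_Mapping.single (b_one A, b_one A) 1) \<and>
     (\<forall>x\<in>C. \<forall>y\<in>C. e (mul x y) = e x * e y) \<and>
     e (b_one A) = 1)"

definition bialg_hom :: "('k::field, 'b, 'm) bialg_scheme \<Rightarrow> ('k, 'a, 'n) bialg_scheme \<Rightarrow> ('b \<Rightarrow> 'a) \<Rightarrow> bool" where
  "bialg_hom B A \<pi> \<longleftrightarrow>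
    (\<forall>x\<in>b_carrier B. \<pi> x \<in> b_carrier A) \<and>
    (\<forall>x\<in>b_carrier B. \<forall>y\<in>b_carrier B. \<pi> (b_add B x y) = b_add A (\<pi> x) (\<pi> y)) \<and>
    (\<forall>c. \<forall>x\<in>b_carrier B. \<pi> (b_smult B c x) = b_smult A c (\<pi> x)) \<and>
    (\<forall>x\<in>b_carrier B. \<forall>y\<in>b_carrier B. \<pi> (b_mult B x y) = b_mult A (\<pi> x) (\<pi> y)) \<and>
    \<pi> (b_one B) = b_one A \<and>
    (\<forall>x\<in>b_carrier B. teq2 A (b_comult A (\<pi> x)) (tmap2 \<pi> \<pi> (b_comult B x))) \<and>
    (\<forall>x\<in>b_carrier B. b_counit A (\<pi> x) = b_counit B x)"

text \<open>Multi-indices of length l; they index the basis x_I of V^(x)l.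
  A linear map f : V^(x)p \<rightarrow> V^(x)q is given by its matrix: f(x_I) = sum_J f I J x_J.\<close>
definition idx :: "nat \<Rightarrow> nat \<Rightarrow> nat list set" where
  "idx n l = {I. length I = l \<and> set I \<subseteq> {..<n}}"

definition aprod :: "('k, 'a, 'm) bialg_scheme \<Rightarrow> (nat \<Rightarrow> nat \<Rightarrow> 'a) \<Rightarrow> nat list \<Rightarrow> nat list \<Rightarrow> 'a" where
  "aprod A a I J = foldr (\<lambda>ij acc. b_mult A (a (fst ij) (snd ij)) acc) (zip I J) (b_one A)"

text \<open>A left A-comodule structure rho_A(x_i) = sum_j a i j (x) x_j on V: coassociativity
  and counitality written in the basis x_j.\<close>
definition comodule_mat :: "('k::field, 'a, 'm) bialg_scheme \<Rightarrow> nat \<Rightarrow> (nat \<Rightarrow> nat \<Rightarrow> 'a) \<Rightarrow> bool" where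
  "comodule_mat A n a \<longleftrightarrow>
    (\<forall>i<n. \<forall>j<n. a i j \<in> b_carrier A) \<and>
    (\<forall>i<n. \<forall>j<n. teq2 A (b_comult A (a i j)) (\<Sum>k<n. Poly_Mapping.single (a i k, a k j) 1)) \<and>
    (\<forall>i<n. \<forall>j<n. b_counit A (a i j) = (if i = j then 1 else 0))"

text \<open>f : V^(x)p \<rightarrow> V^(x)q is A-colinear for the tensor product comodule structures
  rho(x_I) = sum_J a_I^J (x) x_J, i.e. (id (x) f) o rho = rho o f, in coordinates.\<close>
definition colinear :: "('k::field, 'a, 'm) bialg_scheme \<Rightarrow> nat \<Rightarrow> (nat \<Rightarrow> nat \<Rightarrow> 'a) \<Rightarrow> nat \<Rightarrow> nat \<Rightarrow> (nat list \<Rightarrow> nat list \<Rightarrow> 'k) \<Rightarrow> bool" where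
  "colinear A n a p q f \<longleftrightarrow>
    (\<forall>I\<in>idx n p. \<forall>K\<in>idx n q.
       vsum A (\<lambda>J. b_smult A (f J K) (aprod A a I J)) (idx n p)
     = vsum A (\<lambda>J. b_smult A (f I J) (aprod A a J K)) (idx n q))"

text \<open>TC = free algebra on the generators t_i^j (i,j < n): noncommutative polynomials,
  i.e. finitely supported functions on words of generators (i,j).\<close>
type_synonym 'k tc = "(nat \<times> nat) list \<Rightarrow>\<^sub>0 'k"

definition tc_carrier :: "nat \<Rightarrow> 'k::field tc set" where
  "tc_carrier n = {p. \<forall>w\<in>Poly_Mapping.keys p. \<forall>ij\<in>set w. fst ij < n \<and> snd ij < n}"

definition tc_mul :: "'k::field tc \<Rightarrow> 'k tc \<Rightarrow> 'k tc" where
  "tc_mul p q = (\<Sum>u\<in>Poly_Mapping.keys p. \<Sum>w\<in>Poly_Mapping.keys q. Poly_Mapping.single (u @ w) (Poly_Mapping.lookup p u * Poly_Mapping.lookup q w))"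

definition tc_one :: "'k::field tc" where
  "tc_one = Poly_Mapping.single [] 1"

definition tword :: "nat list \<Rightarrow> nat list \<Rightarrow> 'k::field tc" where
  "tword I J = Poly_Mapping.single (zip I J) 1"

text \<open>Induced bialgebra structure: Delta(t_i^j) = sum_k t_i^k (x) t_k^j, eps(t_i^j) = delta_i^j,
  extended multiplicatively and linearly.\<close>
definition tc_comult :: "nat \<Rightarrow> 'k::field tc \<Rightarrow> ('k tc \<times> 'k tc) \<Rightarrow>\<^sub>0 'k" where
  "tc_comult n p = (\<Sum>w\<in>Poly_Mapping.keys p. \<Sum>ks\<in>idx n (length w).
      Poly_Mapping.single (tword (map fst w) ks, tword ks (map snd w)) (Poly_Mapping.lookup p w))"

definition tc_counit :: "'k::field tc \<Rightarrow> 'k" where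
  "tc_counit p = (\<Sum>w\<in>Poly_Mapping.keys p. if (\<forall>ij\<in>set w. fst ij = snd ij) then Poly_Mapping.lookup p w else 0)"

definition ideal_gen :: "nat \<Rightarrow> nat \<Rightarrow> nat \<Rightarrow> (nat list \<Rightarrow> nat list \<Rightarrow> 'k::field) \<Rightarrow> nat list \<Rightarrow> nat list \<Rightarrow> 'k tc" where
  "ideal_gen n p q f I K =
     (\<Sum>J\<in>idx n p. pm_smult (f J K) (tword I J)) - (\<Sum>J\<in>idx n q. pm_smult (f I J) (tword J K))"

inductive_set tc_ideal :: "nat \<Rightarrow> 'k::field tc set \<Rightarrow> 'k tc set" for n G where
  gen: "g \<in> G \<Longrightarrow> g \<in> tc_ideal n G"
| z: "0 \<in> tc_ideal n G"
| add: "u \<in> tc_ideal n G \<Longrightarrow> v \<in> tc_ideal n G \<Longrightarrow> u + v \<in> tc_ideal n G"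
| sm: "u \<in> tc_ideal n G \<Longrightarrow> pm_smult c u \<in> tc_ideal n G"
| lmul: "x \<in> tc_carrier n \<Longrightarrow> u \<in> tc_ideal n G \<Longrightarrow> tc_mul x u \<in> tc_ideal n G"
| rmul: "x \<in> tc_carrier n \<Longrightarrow> u \<in> tc_ideal n G \<Longrightarrow> tc_mul u x \<in> tc_ideal n G"

text \<open>I_F = sum of the I_{f_i}, i.e. the ideal generated by all generators of all f_i.
  The family F is given by arities nin i, mout i and matrices fm i.\<close>
definition IF :: "nat \<Rightarrow> ('i \<Rightarrow> nat) \<Rightarrow> ('i \<Rightarrow> nat) \<Rightarrow> ('i \<Rightarrow> nat list \<Rightarrow> nat list \<Rightarrow> 'k::field) \<Rightarrow> 'k tc set" where
  "IF n nin mout fm = tc_ideal n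
     {ideal_gen n (nin i) (mout i) (fm i) I K | i I K. I \<in> idx n (nin i) \<and> K \<in> idx n (mout i)}"

definition coset :: "'k::field tc set \<Rightarrow> 'k tc \<Rightarrow> 'k tc set" where
  "coset R p = {p + r | r. r \<in> R}"

definition rep :: "'k::field tc set \<Rightarrow> 'k tc" where
  "rep X = (SOME p. p \<in> X)"

definition AF :: "nat \<Rightarrow> ('i \<Rightarrow> nat) \<Rightarrow> ('i \<Rightarrow> nat) \<Rightarrow> ('i \<Rightarrow> nat list \<Rightarrow> nat list \<Rightarrow> 'k::field)
                  \<Rightarrow> ('k, 'k tc set) bialg" where
  "AF n nin mout fm =
    (let R = IF n nin mout fm in
     \<lparr> b_carrier = {coset R p | p. p \<in> tc_carrier n},
       b_zero = coset R 0,
       b_add = (\<lambda>X Y. coset R (rep X + rep Y)),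
       b_smult = (\<lambda>c X. coset R (pm_smult c (rep X))),
       b_mult = (\<lambda>X Y. coset R (tc_mul (rep X) (rep Y))),
       b_one = coset R tc_one,
       b_comult = (\<lambda>X. tmap2 (coset R) (coset R) (tc_comult n (rep X))),
       b_counit = (\<lambda>X. tc_counit (rep X)) \<rparr>)"

definition AF_t :: "nat \<Rightarrow> ('i \<Rightarrow> nat) \<Rightarrow> ('i \<Rightarrow> nat) \<Rightarrow> ('i \<Rightarrow> nat list \<Rightarrow> nat list \<Rightarrow> 'k::field)
                  \<Rightarrow> nat \<Rightarrow> nat \<Rightarrow> 'k tc set" where
  "AF_t n nin mout fm i j = coset (IF n nin mout fm) (tword [i] [j])"

end

(*
  TC is the free algebra on the t_i^j, so t_i^j |-> a_i^j (the coefficients of rho_A) extends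
  to an algebra map ev : TC -> A.  Written in the basis, colinearity of f_i says precisely that
  ev kills the generators of I_(f_i), so ev factors through A(F).  It is comultiplicative
  because Delta_A and Delta_TC are multiplicative and the comodule axiom
  Delta_A(a_i^j) = sum_k a_i^k (x) a_k^j matches Delta_TC(t_i^j) on the generators; likewise
  for the counit.  Uniqueness holds because A(F) is generated as an algebra by the classes
  of the t_i^j.
*)

theory Submission
  imports Defs
begin

lemma lookup_pm_smult [simp]: "Poly_Mapping.lookup (pm_smult c u) k = c * Poly_Mapping.lookup u k"
  unfolding pm_smult_def by (simp add: Poly_Mapping.map.rep_eq when_def)

lemma keys_pm_smult: "Poly_Mapping.keys (pm_smult c u) \<subseteq> Poly_Mapping.keys u"
  by (auto simp: in_keys_iff)

lemma pm_smult_add: "pm_smult c (u + v) = pm_smult c u + pm_smult c v"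
  by (rule poly_mapping_eqI) (simp add: lookup_add distrib_left)

lemma pm_smult_diff: "pm_smult c (u - v) = pm_smult c u - pm_smult c v"
  by (rule poly_mapping_eqI) (simp add: lookup_minus right_diff_distrib)

lemma pm_smult_sum: "pm_smult c (\<Sum>x\<in>S. f x) = (\<Sum>x\<in>S. pm_smult c (f x))"
  by (rule poly_mapping_eqI) (simp add: lookup_sum sum_distrib_left)

lemma pm_smult_single: "pm_smult c (Poly_Mapping.single k d) = Poly_Mapping.single k (c * d)"
  by (rule poly_mapping_eqI) (simp add: lookup_single when_def)

lemma pm_smult_minus_one: "pm_smult (-1) u = - u"
  by (rule poly_mapping_eqI) simp

lemma pm_smult_zero [simp]: "pm_smult 0 u = 0" "pm_smult c 0 = 0"
  by (rule poly_mapping_eqI, simp)+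

lemma sum_single_lookup: "(\<Sum>k\<in>Poly_Mapping.keys u. Poly_Mapping.single k (Poly_Mapping.lookup u k)) = u"
  by (rule poly_mapping_eqI) (simp add: lookup_sum lookup_single when_def in_keys_iff)

lemma tmap2_eq_sum_superset:
  assumes "finite S" "Poly_Mapping.keys u \<subseteq> S"
  shows "tmap2 f g u = (\<Sum>p\<in>S. Poly_Mapping.single (f (fst p), g (snd p)) (Poly_Mapping.lookup u p))"
  unfolding tmap2_def by (rule sum.mono_neutral_left[OF assms]) (auto simp: in_keys_iff)

lemma tmap2_zero [simp]: "tmap2 f g 0 = 0"
  by (simp add: tmap2_def)

lemma tmap2_single: "tmap2 f g (Poly_Mapping.single p c) = Poly_Mapping.single (f (fst p), g (snd p)) c"
  by (simp add: tmap2_def)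

lemma tmap2_add: "tmap2 f g (u + v) = tmap2 f g u + tmap2 f g v"
proof -
  have S: "finite (Poly_Mapping.keys u \<union> Poly_Mapping.keys v)" by simp
  show ?thesis
    using keys_add[of u v] by (simp add: tmap2_eq_sum_superset[OF S] lookup_add single_add sum.distrib)
qed

lemma tmap2_smult: "tmap2 f g (pm_smult c u) = pm_smult c (tmap2 f g u)"
  using tmap2_eq_sum_superset[of "Poly_Mapping.keys u" "pm_smult c u"] keys_pm_smult[of c u]
  by (simp add: tmap2_def pm_smult_sum pm_smult_single)

lemma tmap2_diff:
  fixes u v :: "_ \<Rightarrow>\<^sub>0 'k::ab_group_add"
  shows "tmap2 f g (u - v) = tmap2 f g u - tmap2 f g v"
  using tmap2_add[of f g "u - v" v] by (simp add: eq_diff_eq)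

lemma tmap2_sum: "tmap2 f g (\<Sum>x\<in>S. h x) = (\<Sum>x\<in>S. tmap2 f g (h x))"
  by (induction S rule: infinite_finite_induct) (auto simp: tmap2_add)

lemma tmap2_comp: "tmap2 f g (tmap2 f' g' u) = tmap2 (f \<circ> f') (g \<circ> g') u"
  by (simp add: tmap2_def[of f' g'] tmap2_sum tmap2_single) (simp add: tmap2_def)

lemma tmap2_cong:
  assumes "\<And>p. p \<in> Poly_Mapping.keys u \<Longrightarrow> f (fst p) = f' (fst p) \<and> g (snd p) = g' (snd p)"
  shows "tmap2 f g u = tmap2 f' g' u"
  unfolding tmap2_def using assms by (intro sum.cong) auto

definition pm_bilinear :: "('p \<Rightarrow> 'q \<Rightarrow> 'r) \<Rightarrow> ('p \<Rightarrow>\<^sub>0 'k::comm_ring_1) \<Rightarrow> ('q \<Rightarrow>\<^sub>0 'k) \<Rightarrow> ('r \<Rightarrow>\<^sub>0 'k)" where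
  "pm_bilinear h u v = (\<Sum>p\<in>Poly_Mapping.keys u. \<Sum>q\<in>Poly_Mapping.keys v.
      Poly_Mapping.single (h p q) (Poly_Mapping.lookup u p * Poly_Mapping.lookup v q))"

lemma tc_mul_eq_pm_bilinear: "tc_mul = pm_bilinear (@)"
  by (intro ext) (simp add: tc_mul_def pm_bilinear_def)

lemma tmult_eq_pm_bilinear:
  "tmult A = pm_bilinear (\<lambda>p q. (b_mult A (fst p) (fst q), b_mult A (snd p) (snd q)))"
  by (intro ext) (simp add: tmult_def pm_bilinear_def)

lemma pm_bilinear_eq_sum_superset:
  assumes "finite S" "Poly_Mapping.keys u \<subseteq> S" "finite T" "Poly_Mapping.keys v \<subseteq> T"
  shows "pm_bilinear h u v = (\<Sum>p\<in>S. \<Sum>q\<in>T.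
           Poly_Mapping.single (h p q) (Poly_Mapping.lookup u p * Poly_Mapping.lookup v q))"
  unfolding pm_bilinear_def
  by (subst sum.mono_neutral_left[OF assms(3,4)], force simp: in_keys_iff,
      rule sum.mono_neutral_left[OF assms(1,2)]) (auto simp: in_keys_iff)

lemma pm_bilinear_add_left: "pm_bilinear h (u1 + u2) v = pm_bilinear h u1 v + pm_bilinear h u2 v"
proof -
  have S: "finite (Poly_Mapping.keys u1 \<union> Poly_Mapping.keys u2)" "finite (Poly_Mapping.keys v)"
    by simp_all
  show ?thesis
    using keys_add[of u1 u2]
    by (simp add: pm_bilinear_eq_sum_superset[OF S(1) _ S(2)] lookup_add distrib_right single_add sum.distrib)
qed

lemma pm_bilinear_add_right: "pm_bilinear h u (v1 + v2) = pm_bilinear h u v1 + pm_bilinear h u v2"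
proof -
  have S: "finite (Poly_Mapping.keys u)" "finite (Poly_Mapping.keys v1 \<union> Poly_Mapping.keys v2)"
    by simp_all
  show ?thesis
    using keys_add[of v1 v2]
    by (simp add: pm_bilinear_eq_sum_superset[OF S(1) _ S(2)] lookup_add distrib_left single_add sum.distrib)
qed

lemma pm_bilinear_zero [simp]: "pm_bilinear h 0 v = 0" "pm_bilinear h u 0 = 0"
  by (simp_all add: pm_bilinear_def)

lemma pm_bilinear_minus_left: "pm_bilinear h (- u) v = - pm_bilinear h u v"
  by (simp add: pm_bilinear_def lookup_uminus single_uminus sum_negf)

lemma pm_bilinear_minus_right: "pm_bilinear h u (- v) = - pm_bilinear h u v"
  by (simp add: pm_bilinear_def lookup_uminus single_uminus sum_negf)

lemma pm_bilinear_diff_left: "pm_bilinear h (u1 - u2) v = pm_bilinear h u1 v - pm_bilinear h u2 v"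
  using pm_bilinear_add_left[of h u1 "- u2" v] by (simp add: pm_bilinear_minus_left)

lemma pm_bilinear_diff_right: "pm_bilinear h u (v1 - v2) = pm_bilinear h u v1 - pm_bilinear h u v2"
  using pm_bilinear_add_right[of h u v1 "- v2"] by (simp add: pm_bilinear_minus_right)

lemma pm_bilinear_sum_left: "pm_bilinear h (\<Sum>x\<in>S. f x) v = (\<Sum>x\<in>S. pm_bilinear h (f x) v)"
  by (induction S rule: infinite_finite_induct) (simp_all add: pm_bilinear_add_left)

lemma pm_bilinear_sum_right: "pm_bilinear h u (\<Sum>x\<in>S. f x) = (\<Sum>x\<in>S. pm_bilinear h u (f x))"
  by (induction S rule: infinite_finite_induct) (simp_all add: pm_bilinear_add_right)

lemma pm_bilinear_single:
  "pm_bilinear h (Poly_Mapping.single p c) (Poly_Mapping.single q d) = Poly_Mapping.single (h p q) (c * d)"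
  by (simp add: pm_bilinear_def)

lemma tmult_single_right:
  "tmult A u (Poly_Mapping.single q c)
     = pm_smult c (tmap2 (\<lambda>x. b_mult A x (fst q)) (\<lambda>y. b_mult A y (snd q)) u)"
  by (cases "c = 0") (simp_all add: tmult_def tmap2_def pm_smult_sum pm_smult_single mult.commute)

lemma tmult_single_left:
  "tmult A (Poly_Mapping.single p c) v
     = pm_smult c (tmap2 (b_mult A (fst p)) (b_mult A (snd p)) v)"
  by (cases "c = 0") (simp_all add: tmult_def tmap2_def pm_smult_sum pm_smult_single)

lemma tnull2_sum: "(\<And>x. x \<in> S \<Longrightarrow> f x \<in> tnull2 A) \<Longrightarrow> (\<Sum>x\<in>S. f x) \<in> tnull2 A"
  by (induction S rule: infinite_finite_induct) (auto intro: tnull2.intros)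

lemma teq2_refl [simp]: "teq2 A u u"
  by (simp add: teq2_def tnull2.z)

lemma teq2_trans [trans]: "teq2 A u v \<Longrightarrow> teq2 A v w \<Longrightarrow> teq2 A u w"
  unfolding teq2_def using tnull2.add[of "u - v" A "v - w"] by simp

lemma teq2_add: "teq2 A u u' \<Longrightarrow> teq2 A v v' \<Longrightarrow> teq2 A (u + v) (u' + v')"
  unfolding teq2_def using tnull2.add[of "u - u'" A "v - v'"] by (simp add: algebra_simps)

lemma teq2_smult: "teq2 A u u' \<Longrightarrow> teq2 A (pm_smult c u) (pm_smult c u')"
  unfolding teq2_def using tnull2.sm[of "u - u'" A c] by (simp add: pm_smult_diff)

lemma teq2_sum: "(\<And>x. x \<in> S \<Longrightarrow> teq2 A (f x) (g x)) \<Longrightarrow> teq2 A (\<Sum>x\<in>S. f x) (\<Sum>x\<in>S. g x)"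
  by (induction S rule: infinite_finite_induct) (auto intro: teq2_add)

definition linear_endo :: "('k::field, 'a, 'm) bialg_scheme \<Rightarrow> ('a \<Rightarrow> 'a) \<Rightarrow> bool" where
  "linear_endo A f \<longleftrightarrow>
    (\<forall>x\<in>b_carrier A. f x \<in> b_carrier A) \<and>
    (\<forall>x\<in>b_carrier A. \<forall>y\<in>b_carrier A. f (b_add A x y) = b_add A (f x) (f y)) \<and>
    (\<forall>c. \<forall>x\<in>b_carrier A. f (b_smult A c x) = b_smult A c (f x))"

lemma tmap2_tnull2:
  assumes "linear_endo A f" "linear_endo A g" "u \<in> tnull2 A"
  shows "tmap2 f g u \<in> tnull2 A"
  using assms(3)
proof (induction u rule: tnull2.induct)
  case (add u v)
  then show ?case by (simp add: tmap2_add tnull2.add)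
next
  case (sm u c)
  then show ?case by (simp add: tmap2_smult tnull2.sm)
qed (use assms(1,2) in \<open>simp_all add: linear_endo_def tmap2_diff tmap2_single tnull2.intros\<close>)

lemma vsum_cong: "(\<And>x. x \<in> S \<Longrightarrow> g x = h x) \<Longrightarrow> vsum A g S = vsum A h S"
  unfolding vsum_def by (rule fold_closed_eq[where B = UNIV]) auto

lemma vsum_empty [simp]: "vsum A g {} = b_zero A"
  by (simp add: vsum_def)

locale bialgebra =
  fixes A :: "('k::field, 'a) bialg"
  assumes is_bialgebra: "is_bialgebra A"
begin

abbreviation carrier where "carrier \<equiv> b_carrier A"
abbreviation zero_A ("\<zero>") where "\<zero> \<equiv> b_zero A"
abbreviation one_A ("\<one>") where "\<one> \<equiv> b_one A"
abbreviation add_A (infixl "\<oplus>" 65) where "x \<oplus> y \<equiv> b_add A x y"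
abbreviation smult_A (infixr "\<cdot>" 75) where "c \<cdot> x \<equiv> b_smult A c x"
abbreviation mult_A (infixl "\<otimes>" 70) where "x \<otimes> y \<equiv> b_mult A x y"
abbreviation comult_A ("\<Delta>") where "\<Delta> \<equiv> b_comult A"
abbreviation counit_A ("\<epsilon>") where "\<epsilon> \<equiv> b_counit A"

lemmas axioms = is_bialgebra[unfolded is_bialgebra_def Let_def]

lemma zero_closed [simp]: "\<zero> \<in> carrier"
  using axioms by simp

lemma one_closed [simp]: "\<one> \<in> carrier"
  using axioms by simp

lemma add_closed [simp]: "x \<in> carrier \<Longrightarrow> y \<in> carrier \<Longrightarrow> x \<oplus> y \<in> carrier"
  using axioms by simp

lemma smult_closed [simp]: "x \<in> carrier \<Longrightarrow> c \<cdot> x \<in> carrier"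
  using axioms by simp

lemma mult_closed [simp]: "x \<in> carrier \<Longrightarrow> y \<in> carrier \<Longrightarrow> x \<otimes> y \<in> carrier"
  using axioms by simp

lemma add_assoc: "x \<in> carrier \<Longrightarrow> y \<in> carrier \<Longrightarrow> z \<in> carrier \<Longrightarrow> x \<oplus> y \<oplus> z = x \<oplus> (y \<oplus> z)"
  using axioms by metis

lemma add_commute: "x \<in> carrier \<Longrightarrow> y \<in> carrier \<Longrightarrow> x \<oplus> y = y \<oplus> x"
  using axioms by metis

lemma zero_add [simp]: "x \<in> carrier \<Longrightarrow> \<zero> \<oplus> x = x"
  using axioms by metis

lemma add_neg: "x \<in> carrier \<Longrightarrow> x \<oplus> (-1) \<cdot> x = \<zero>"
  using axioms by metis

lemma smult_add_right: "x \<in> carrier \<Longrightarrow> y \<in> carrier \<Longrightarrow> c \<cdot> (x \<oplus> y) = c \<cdot> x \<oplus> c \<cdot> y"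
  using axioms by simp

lemma smult_add_left: "x \<in> carrier \<Longrightarrow> (c + d) \<cdot> x = c \<cdot> x \<oplus> d \<cdot> x"
  using axioms by simp

lemma smult_smult: "x \<in> carrier \<Longrightarrow> c \<cdot> d \<cdot> x = (c * d) \<cdot> x"
  using axioms by simp

lemma smult_one [simp]: "x \<in> carrier \<Longrightarrow> 1 \<cdot> x = x"
  using axioms by simp

lemma mult_assoc: "x \<in> carrier \<Longrightarrow> y \<in> carrier \<Longrightarrow> z \<in> carrier \<Longrightarrow> x \<otimes> y \<otimes> z = x \<otimes> (y \<otimes> z)"
  using axioms by simp

lemma one_mult [simp]: "x \<in> carrier \<Longrightarrow> \<one> \<otimes> x = x"
  using axioms by simp

lemma mult_one [simp]: "x \<in> carrier \<Longrightarrow> x \<otimes> \<one> = x"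
  using axioms by simp

lemma mult_add_right:
  "x \<in> carrier \<Longrightarrow> y \<in> carrier \<Longrightarrow> z \<in> carrier \<Longrightarrow> x \<otimes> (y \<oplus> z) = x \<otimes> y \<oplus> x \<otimes> z"
  using axioms by simp

lemma mult_add_left:
  "x \<in> carrier \<Longrightarrow> y \<in> carrier \<Longrightarrow> z \<in> carrier \<Longrightarrow> (x \<oplus> y) \<otimes> z = x \<otimes> z \<oplus> y \<otimes> z"
  using axioms by simp

lemma smult_mult_left: "x \<in> carrier \<Longrightarrow> y \<in> carrier \<Longrightarrow> (c \<cdot> x) \<otimes> y = c \<cdot> (x \<otimes> y)"
  using axioms by simp

lemma smult_mult_right: "x \<in> carrier \<Longrightarrow> y \<in> carrier \<Longrightarrow> x \<otimes> (c \<cdot> y) = c \<cdot> (x \<otimes> y)"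
  using axioms by metis

lemma keys_comult: "x \<in> carrier \<Longrightarrow> Poly_Mapping.keys (\<Delta> x) \<subseteq> carrier \<times> carrier"
  using axioms by simp

lemma comult_add: "x \<in> carrier \<Longrightarrow> y \<in> carrier \<Longrightarrow> teq2 A (\<Delta> (x \<oplus> y)) (\<Delta> x + \<Delta> y)"
  using axioms by simp

lemma comult_smult: "x \<in> carrier \<Longrightarrow> teq2 A (\<Delta> (c \<cdot> x)) (pm_smult c (\<Delta> x))"
  using axioms by simp

lemma comult_mult: "x \<in> carrier \<Longrightarrow> y \<in> carrier \<Longrightarrow> teq2 A (\<Delta> (x \<otimes> y)) (tmult A (\<Delta> x) (\<Delta> y))"
  using axioms by simp

lemma comult_one: "teq2 A (\<Delta> \<one>) (Poly_Mapping.single (\<one>, \<one>) 1)"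
  using axioms by simp

lemma counit_add: "x \<in> carrier \<Longrightarrow> y \<in> carrier \<Longrightarrow> \<epsilon> (x \<oplus> y) = \<epsilon> x + \<epsilon> y"
  using axioms by simp

lemma counit_smult: "x \<in> carrier \<Longrightarrow> \<epsilon> (c \<cdot> x) = c * \<epsilon> x"
  using axioms by simp

lemma counit_mult: "x \<in> carrier \<Longrightarrow> y \<in> carrier \<Longrightarrow> \<epsilon> (x \<otimes> y) = \<epsilon> x * \<epsilon> y"
  using axioms by simp

lemma counit_one: "\<epsilon> \<one> = 1"
  using axioms by simp

lemma add_zero [simp]: "x \<in> carrier \<Longrightarrow> x \<oplus> \<zero> = x"
  using add_commute[of x "\<zero>"] by simp

lemma add_left_cancel:
  assumes "x \<in> carrier" "y \<in> carrier" "z \<in> carrier" "x \<oplus> y = x \<oplus> z"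
  shows "y = z"
proof -
  have "(-1) \<cdot> x \<oplus> x = \<zero>"
    using assms(1) add_neg add_commute by (metis smult_closed)
  then have "\<And>w. w \<in> carrier \<Longrightarrow> (-1) \<cdot> x \<oplus> (x \<oplus> w) = w"
    using assms(1) by (metis add_assoc smult_closed zero_add)
  then show ?thesis using assms by metis
qed

lemma smult_zero_left [simp]: "x \<in> carrier \<Longrightarrow> 0 \<cdot> x = \<zero>"
  using smult_add_left[of x 0 0] add_left_cancel[of "0 \<cdot> x" "0 \<cdot> x" "\<zero>"] by simp

lemma smult_zero_right [simp]: "c \<cdot> \<zero> = \<zero>"
  using smult_smult[of "\<zero>" c 0] by simp

lemma mult_zero [simp]: "x \<in> carrier \<Longrightarrow> x \<otimes> \<zero> = \<zero>" "x \<in> carrier \<Longrightarrow> \<zero> \<otimes> x = \<zero>"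
  using smult_mult_right[of x "\<zero>" 0] smult_mult_left[of "\<zero>" x 0] by simp_all

lemma counit_zero [simp]: "\<epsilon> \<zero> = 0"
  using counit_smult[of "\<zero>" 0] by simp

lemma comult_zero: "teq2 A (\<Delta> \<zero>) 0"
  using comult_smult[of "\<zero>" 0] by simp

lemma linear_endo_mult_left: "x \<in> carrier \<Longrightarrow> linear_endo A ((\<otimes>) x)"
  by (simp add: linear_endo_def mult_add_right smult_mult_right)

lemma linear_endo_mult_right: "y \<in> carrier \<Longrightarrow> linear_endo A (\<lambda>x. x \<otimes> y)"
  by (simp add: linear_endo_def mult_add_left smult_mult_left)

lemma tmult_tnull2_left:
  assumes "u \<in> tnull2 A" "Poly_Mapping.keys v \<subseteq> carrier \<times> carrier"
  shows "tmult A u v \<in> tnull2 A"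
proof -
  have "tmult A u v = (\<Sum>q\<in>Poly_Mapping.keys v. tmult A u (Poly_Mapping.single q (Poly_Mapping.lookup v q)))"
    by (simp add: tmult_eq_pm_bilinear pm_bilinear_sum_right[symmetric] sum_single_lookup)
  also have "\<dots> \<in> tnull2 A"
    using assms by (auto simp: tmult_single_right intro!: tnull2_sum tnull2.sm tmap2_tnull2
                         linear_endo_mult_right)
  finally show ?thesis .
qed

lemma tmult_tnull2_right:
  assumes "v \<in> tnull2 A" "Poly_Mapping.keys u \<subseteq> carrier \<times> carrier"
  shows "tmult A u v \<in> tnull2 A"
proof -
  have "tmult A u v = (\<Sum>p\<in>Poly_Mapping.keys u. tmult A (Poly_Mapping.single p (Poly_Mapping.lookup u p)) v)"
    by (simp add: tmult_eq_pm_bilinear pm_bilinear_sum_left[symmetric] sum_single_lookup)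
  also have "\<dots> \<in> tnull2 A"
    using assms by (auto simp: tmult_single_left intro!: tnull2_sum tnull2.sm tmap2_tnull2
                         linear_endo_mult_left)
  finally show ?thesis .
qed

lemma teq2_tmult:
  assumes "teq2 A u u'" "teq2 A v v'"
    and "Poly_Mapping.keys u' \<subseteq> carrier \<times> carrier" "Poly_Mapping.keys v \<subseteq> carrier \<times> carrier"
  shows "teq2 A (tmult A u v) (tmult A u' v')"
proof -
  have "tmult A u v - tmult A u' v' = tmult A (u - u') v + tmult A u' (v - v')"
    by (simp add: tmult_eq_pm_bilinear pm_bilinear_diff_left pm_bilinear_diff_right)
  with assms show ?thesis
    unfolding teq2_def by (simp add: tnull2.add tmult_tnull2_left tmult_tnull2_right)
qed

definition into_carrier :: "'a \<Rightarrow> 'a" where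
  "into_carrier y = (if y \<in> carrier then y else \<zero>)"

lemma vsum_eq_fold_into_carrier:
  "(\<And>x. x \<in> S \<Longrightarrow> g x \<in> carrier) \<Longrightarrow> vsum A g S = Finite_Set.fold (\<lambda>x y. g x \<oplus> into_carrier y) \<zero> S"
  unfolding vsum_def by (rule fold_closed_eq[where B = carrier]) (auto simp: into_carrier_def)

text \<open>The addition of \<open>A\<close> commutes only on the carrier; clamping the accumulator into the carrier
  makes the summation steps commute on the whole type.\<close>

lemma comp_fun_commute_on_add_into_carrier:
  "comp_fun_commute_on {x. g x \<in> carrier} (\<lambda>x y. g x \<oplus> into_carrier y)"
proof
  fix x y assume "x \<in> {x. g x \<in> carrier}" "y \<in> {x. g x \<in> carrier}"
  then show "(\<lambda>z. g y \<oplus> into_carrier z) \<circ> (\<lambda>z. g x \<oplus> into_carrier z)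
           = (\<lambda>z. g x \<oplus> into_carrier z) \<circ> (\<lambda>z. g y \<oplus> into_carrier z)"
    by (auto simp: into_carrier_def add_assoc[symmetric] add_commute[of "g x" "g y"])
qed

lemma vsum_insert_into_carrier:
  assumes "finite S" "x \<notin> S" "g x \<in> carrier" "\<And>y. y \<in> S \<Longrightarrow> g y \<in> carrier"
  shows "vsum A g (insert x S) = g x \<oplus> into_carrier (vsum A g S)"
proof -
  let ?F = "\<lambda>x y. g x \<oplus> into_carrier y"
  interpret comp_fun_commute_on "{x. g x \<in> carrier}" ?F
    by (rule comp_fun_commute_on_add_into_carrier)
  have "vsum A g (insert x S) = Finite_Set.fold ?F \<zero> (insert x S)"
    using assms by (intro vsum_eq_fold_into_carrier) auto
  also have "\<dots> = ?F x (Finite_Set.fold ?F \<zero> S)"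
    using assms by (intro fold_insert) auto
  also have "Finite_Set.fold ?F \<zero> S = vsum A g S"
    using assms by (intro vsum_eq_fold_into_carrier[symmetric]) auto
  finally show ?thesis .
qed

lemma vsum_closed: "(\<And>x. x \<in> S \<Longrightarrow> g x \<in> carrier) \<Longrightarrow> vsum A g S \<in> carrier"
proof (induction S rule: infinite_finite_induct)
  case (infinite S)
  then show ?case by (simp add: vsum_def)
qed (simp_all add: vsum_insert_into_carrier into_carrier_def)

lemma vsum_insert:
  assumes "finite S" "x \<notin> S" "g x \<in> carrier" "\<And>y. y \<in> S \<Longrightarrow> g y \<in> carrier"
  shows "vsum A g (insert x S) = g x \<oplus> vsum A g S"
  using assms by (simp add: vsum_insert_into_carrier into_carrier_def vsum_closed)

lemma vsum_singleton [simp]: "g x \<in> carrier \<Longrightarrow> vsum A g {x} = g x"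
  using vsum_insert[of "{}" x g] by simp

lemma vsum_add:
  assumes "finite S" "\<And>x. x \<in> S \<Longrightarrow> g x \<in> carrier" "\<And>x. x \<in> S \<Longrightarrow> h x \<in> carrier"
  shows "vsum A (\<lambda>x. g x \<oplus> h x) S = vsum A g S \<oplus> vsum A h S"
  using assms
proof (induction S rule: finite_induct)
  case (insert x S)
  have "vsum A g S \<in> carrier" "vsum A h S \<in> carrier"
    using insert.prems by (auto intro: vsum_closed)
  with insert show ?case
    by (simp add: vsum_insert add_assoc add_assoc[symmetric, of "h x"] add_commute[of "h x" "vsum A g S"])
qed simp

lemma vsum_smult:
  assumes "finite S" "\<And>x. x \<in> S \<Longrightarrow> g x \<in> carrier"
  shows "vsum A (\<lambda>x. c \<cdot> g x) S = c \<cdot> vsum A g S"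
  using assms by (induction S rule: finite_induct) (simp_all add: vsum_insert smult_add_right vsum_closed)

lemma vsum_mult_left:
  assumes "finite S" "\<And>x. x \<in> S \<Longrightarrow> g x \<in> carrier" "y \<in> carrier"
  shows "vsum A (\<lambda>x. y \<otimes> g x) S = y \<otimes> vsum A g S"
  using assms by (induction S rule: finite_induct) (simp_all add: vsum_insert mult_add_right vsum_closed)

lemma vsum_mult_right:
  assumes "finite S" "\<And>x. x \<in> S \<Longrightarrow> g x \<in> carrier" "y \<in> carrier"
  shows "vsum A (\<lambda>x. g x \<otimes> y) S = vsum A g S \<otimes> y"
  using assms by (induction S rule: finite_induct) (simp_all add: vsum_insert mult_add_left vsum_closed)

lemma vsum_mono_neutral:
  assumes "finite S" "T \<subseteq> S" "\<And>x. x \<in> T \<Longrightarrow> g x \<in> carrier" "\<And>x. x \<in> S - T \<Longrightarrow> g x = \<zero>"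
  shows "vsum A g S = vsum A g T"
proof -
  have "vsum A g (T \<union> U) = vsum A g T" if "finite U" "U \<subseteq> S - T" for U
    using that
  proof (induction U rule: finite_induct)
    case (insert x U)
    then have "vsum A g (insert x (T \<union> U)) = g x \<oplus> vsum A g (T \<union> U)"
      using assms by (intro vsum_insert) (auto intro: finite_subset)
    with insert assms(4) show ?case
      using assms(3) by (simp add: vsum_closed)
  qed simp
  from this[of "S - T"] assms(1,2) show ?thesis
    by (simp add: Un_absorb1)
qed

lemma counit_vsum:
  assumes "finite S" "\<And>x. x \<in> S \<Longrightarrow> g x \<in> carrier"
  shows "\<epsilon> (vsum A g S) = (\<Sum>x\<in>S. \<epsilon> (g x))"
  using assms by (induction S rule: finite_induct) (simp_all add: vsum_insert counit_add vsum_closed)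

lemma comult_vsum:
  assumes "finite S" "\<And>x. x \<in> S \<Longrightarrow> g x \<in> carrier"
  shows "teq2 A (\<Delta> (vsum A g S)) (\<Sum>x\<in>S. \<Delta> (g x))"
  using assms
proof (induction S rule: finite_induct)
  case (insert x S)
  then have "teq2 A (\<Delta> (vsum A g (insert x S))) (\<Delta> (g x) + \<Delta> (vsum A g S))"
    by (simp add: vsum_insert comult_add vsum_closed)
  also have "teq2 A \<dots> (\<Delta> (g x) + (\<Sum>x\<in>S. \<Delta> (g x)))"
    using insert by (intro teq2_add) auto
  finally show ?case
    using insert by simp
qed (simp add: comult_zero)

end

section \<open>The tensor algebra and its evaluation in a bialgebra\<close>

definition tc_word :: "nat \<Rightarrow> (nat \<times> nat) list \<Rightarrow> bool" where
  "tc_word n w \<longleftrightarrow> (\<forall>ij\<in>set w. fst ij < n \<and> snd ij < n)"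

lemma tc_word_Nil [simp]: "tc_word n []"
  and tc_word_Cons [simp]: "tc_word n ((i, j) # w) \<longleftrightarrow> i < n \<and> j < n \<and> tc_word n w"
  and tc_word_append [simp]: "tc_word n (u @ w) \<longleftrightarrow> tc_word n u \<and> tc_word n w"
  by (auto simp: tc_word_def)

lemma tc_word_zip: "I \<in> idx n l \<Longrightarrow> J \<in> idx n m \<Longrightarrow> tc_word n (zip I J)"
  by (auto simp: tc_word_def idx_def dest: set_zip_leftD set_zip_rightD)

lemma tc_word_idx: "tc_word n w \<Longrightarrow> map fst w \<in> idx n (length w) \<and> map snd w \<in> idx n (length w)"
  by (auto simp: tc_word_def idx_def)

lemma finite_idx [simp]: "finite (idx n l)"
  using finite_lists_length_eq[of "{..<n}" l] by (simp add: idx_def conj_commute)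

lemma idx_0 [simp]: "idx n 0 = {[]}"
  by (auto simp: idx_def)

lemma idx_Suc: "idx n (Suc l) = (\<lambda>(k, ks). k # ks) ` ({..<n} \<times> idx n l)"
  by (auto simp: idx_def length_Suc_conv)

lemma in_tc_carrier_iff: "p \<in> tc_carrier n \<longleftrightarrow> (\<forall>w\<in>Poly_Mapping.keys p. tc_word n w)"
  by (simp add: tc_carrier_def tc_word_def)

lemma tc_carrier_zero [simp]: "0 \<in> tc_carrier n"
  by (simp add: in_tc_carrier_iff)

lemma tc_carrier_single: "tc_word n w \<Longrightarrow> Poly_Mapping.single w c \<in> tc_carrier n"
  by (simp add: in_tc_carrier_iff)

lemma tc_carrier_add: "p \<in> tc_carrier n \<Longrightarrow> q \<in> tc_carrier n \<Longrightarrow> p + q \<in> tc_carrier n"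
  using keys_add[of p q] by (auto simp: in_tc_carrier_iff)

lemma tc_carrier_smult: "p \<in> tc_carrier n \<Longrightarrow> pm_smult c p \<in> tc_carrier n"
  using keys_pm_smult[of c p] by (auto simp: in_tc_carrier_iff)

lemma tc_carrier_diff: "p \<in> tc_carrier n \<Longrightarrow> q \<in> tc_carrier n \<Longrightarrow> p - q \<in> tc_carrier n"
  using tc_carrier_add[of p n "- q"] tc_carrier_smult[of q n "-1"] by (simp add: pm_smult_minus_one)

lemma tc_carrier_sum: "(\<And>x. x \<in> S \<Longrightarrow> h x \<in> tc_carrier n) \<Longrightarrow> (\<Sum>x\<in>S. h x) \<in> tc_carrier n"
  by (induction S rule: infinite_finite_induct) (auto intro: tc_carrier_add)

lemma tc_carrier_mul: "p \<in> tc_carrier n \<Longrightarrow> q \<in> tc_carrier n \<Longrightarrow> tc_mul p q \<in> tc_carrier n"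
  unfolding tc_mul_def by (intro tc_carrier_sum tc_carrier_single) (auto simp: in_tc_carrier_iff)

lemma tc_carrier_tword: "I \<in> idx n l \<Longrightarrow> J \<in> idx n m \<Longrightarrow> tword I J \<in> tc_carrier n"
  unfolding tword_def by (intro tc_carrier_single tc_word_zip)

lemma keys_tc_comult:
  assumes "p \<in> tc_carrier n" "x \<in> Poly_Mapping.keys (tc_comult n p)"
  shows "fst x \<in> tc_carrier n \<and> snd x \<in> tc_carrier n"
proof -
  obtain w ks where w: "w \<in> Poly_Mapping.keys p" and ks: "ks \<in> idx n (length w)"
    and x: "x = (tword (map fst w) ks, tword ks (map snd w))"
    using keys_sum[THEN subsetD, OF assms(2)[unfolded tc_comult_def]]
    by (auto dest!: keys_sum[THEN subsetD] split: if_splits)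
  from w assms(1) have "map fst w \<in> idx n (length w)" "map snd w \<in> idx n (length w)"
    by (simp_all add: in_tc_carrier_iff tc_word_idx)
  with ks x show ?thesis
    by (simp add: tc_carrier_tword)
qed

lemma tc_ideal_subset_tc_carrier:
  assumes "G \<subseteq> tc_carrier n"
  shows "tc_ideal n G \<subseteq> tc_carrier n"
proof
  fix r assume "r \<in> tc_ideal n G"
  then show "r \<in> tc_carrier n"
    by induction (use assms in \<open>auto intro: tc_carrier_add tc_carrier_smult tc_carrier_mul\<close>)
qed

definition weval :: "('k, 'a, 'm) bialg_scheme \<Rightarrow> (nat \<Rightarrow> nat \<Rightarrow> 'a) \<Rightarrow> (nat \<times> nat) list \<Rightarrow> 'a" where
  "weval A a w = foldr (\<lambda>ij acc. b_mult A (a (fst ij) (snd ij)) acc) w (b_one A)"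

definition ev :: "('k::field, 'a, 'm) bialg_scheme \<Rightarrow> (nat \<Rightarrow> nat \<Rightarrow> 'a) \<Rightarrow> 'k tc \<Rightarrow> 'a" where
  "ev A a p = vsum A (\<lambda>w. b_smult A (Poly_Mapping.lookup p w) (weval A a w)) (Poly_Mapping.keys p)"

lemma weval_Nil [simp]: "weval A a [] = b_one A"
  and weval_Cons [simp]: "weval A a ((i, j) # w) = b_mult A (a i j) (weval A a w)"
  by (simp_all add: weval_def)

lemma aprod_eq_weval: "aprod A a I J = weval A a (zip I J)"
  by (simp add: aprod_def weval_def)

locale comodule_matrix = bialgebra A for A :: "('k::field, 'a) bialg" +
  fixes n :: nat and a :: "nat \<Rightarrow> nat \<Rightarrow> 'a"
  assumes comodule_mat: "comodule_mat A n a"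
begin

lemma coeff_closed [simp]: "i < n \<Longrightarrow> j < n \<Longrightarrow> a i j \<in> carrier"
  and comult_coeff: "i < n \<Longrightarrow> j < n \<Longrightarrow> teq2 A (\<Delta> (a i j)) (\<Sum>k<n. Poly_Mapping.single (a i k, a k j) 1)"
  and counit_coeff: "i < n \<Longrightarrow> j < n \<Longrightarrow> \<epsilon> (a i j) = (if i = j then 1 else 0)"
  using comodule_mat by (simp_all add: comodule_mat_def)

lemma weval_closed [simp]: "tc_word n w \<Longrightarrow> weval A a w \<in> carrier"
  by (induction w) auto

lemma weval_append: "tc_word n u \<Longrightarrow> tc_word n w \<Longrightarrow> weval A a (u @ w) = weval A a u \<otimes> weval A a w"
  by (induction u) (auto simp: mult_assoc)

lemma ev_eq_vsum_superset:
  assumes "finite S" "Poly_Mapping.keys p \<subseteq> S" "\<And>w. w \<in> S \<Longrightarrow> tc_word n w"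
  shows "ev A a p = vsum A (\<lambda>w. Poly_Mapping.lookup p w \<cdot> weval A a w) S"
  unfolding ev_def using assms by (intro vsum_mono_neutral[symmetric]) (auto simp: in_keys_iff)

lemma ev_closed [simp]: "p \<in> tc_carrier n \<Longrightarrow> ev A a p \<in> carrier"
  unfolding ev_def by (rule vsum_closed) (simp add: in_tc_carrier_iff)

lemma ev_zero [simp]: "ev A a 0 = \<zero>"
  by (simp add: ev_def)

lemma ev_single: "tc_word n w \<Longrightarrow> ev A a (Poly_Mapping.single w c) = c \<cdot> weval A a w"
  by (cases "c = 0") (simp_all add: ev_def)

lemma ev_add:
  assumes "p \<in> tc_carrier n" "q \<in> tc_carrier n"
  shows "ev A a (p + q) = ev A a p \<oplus> ev A a q"
proof -
  let ?S = "Poly_Mapping.keys p \<union> Poly_Mapping.keys q"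
  have words: "\<And>w. w \<in> ?S \<Longrightarrow> tc_word n w"
    using assms by (auto simp: in_tc_carrier_iff)
  have "ev A a (p + q) = vsum A (\<lambda>w. Poly_Mapping.lookup (p + q) w \<cdot> weval A a w) ?S"
    using keys_add[of p q] words by (intro ev_eq_vsum_superset) auto
  also have "\<dots> = vsum A (\<lambda>w. Poly_Mapping.lookup p w \<cdot> weval A a w
                              \<oplus> Poly_Mapping.lookup q w \<cdot> weval A a w) ?S"
    using words by (intro vsum_cong) (simp add: lookup_add smult_add_left)
  also have "\<dots> = vsum A (\<lambda>w. Poly_Mapping.lookup p w \<cdot> weval A a w) ?S
                   \<oplus> vsum A (\<lambda>w. Poly_Mapping.lookup q w \<cdot> weval A a w) ?S"
    using words by (intro vsum_add) auto
  also have "\<dots> = ev A a p \<oplus> ev A a q"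
    using words by (subst (1 2) ev_eq_vsum_superset[of ?S]) auto
  finally show ?thesis .
qed

lemma ev_smult:
  assumes "p \<in> tc_carrier n"
  shows "ev A a (pm_smult c p) = c \<cdot> ev A a p"
proof -
  have words: "\<And>w. w \<in> Poly_Mapping.keys p \<Longrightarrow> tc_word n w"
    using assms by (auto simp: in_tc_carrier_iff)
  have "ev A a (pm_smult c p)
      = vsum A (\<lambda>w. (c * Poly_Mapping.lookup p w) \<cdot> weval A a w) (Poly_Mapping.keys p)"
    using keys_pm_smult[of c p] words by (simp add: ev_eq_vsum_superset[of "Poly_Mapping.keys p"])
  also have "\<dots> = vsum A (\<lambda>w. c \<cdot> Poly_Mapping.lookup p w \<cdot> weval A a w) (Poly_Mapping.keys p)"
    using words by (intro vsum_cong) (simp add: smult_smult)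
  also have "\<dots> = c \<cdot> ev A a p"
    using words unfolding ev_def by (intro vsum_smult) auto
  finally show ?thesis .
qed

lemma ev_sum:
  assumes "finite S" "\<And>x. x \<in> S \<Longrightarrow> h x \<in> tc_carrier n"
  shows "ev A a (\<Sum>x\<in>S. h x) = vsum A (\<lambda>x. ev A a (h x)) S"
  using assms by (induction S rule: finite_induct) (simp_all add: ev_add tc_carrier_sum vsum_insert)

lemma ev_diff:
  assumes "p \<in> tc_carrier n" "q \<in> tc_carrier n"
  shows "ev A a (p - q) = ev A a p \<oplus> (-1) \<cdot> ev A a q"
proof -
  have "ev A a (p - q) = ev A a (p + pm_smult (-1) q)"
    by (simp add: pm_smult_minus_one)
  with assms show ?thesis
    by (simp add: ev_add ev_smult tc_carrier_smult)
qed

lemma ev_tc_mul: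
  assumes p: "p \<in> tc_carrier n" and q: "q \<in> tc_carrier n"
  shows "ev A a (tc_mul p q) = ev A a p \<otimes> ev A a q"
proof -
  let ?c = "\<lambda>u w. Poly_Mapping.lookup p u * Poly_Mapping.lookup q w"
  have words: "\<And>w. w \<in> Poly_Mapping.keys p \<Longrightarrow> tc_word n w" "\<And>w. w \<in> Poly_Mapping.keys q \<Longrightarrow> tc_word n w"
    using p q by (auto simp: in_tc_carrier_iff)
  have "ev A a (tc_mul p q)
      = vsum A (\<lambda>u. vsum A (\<lambda>w. ?c u w \<cdot> weval A a (u @ w)) (Poly_Mapping.keys q)) (Poly_Mapping.keys p)"
    unfolding tc_mul_def using words
    by (simp add: ev_sum tc_carrier_sum tc_carrier_single ev_single cong: vsum_cong)
  also have "\<dots> = vsum A (\<lambda>u. vsum A (\<lambda>w. (Poly_Mapping.lookup p u \<cdot> weval A a u)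
                       \<otimes> (Poly_Mapping.lookup q w \<cdot> weval A a w)) (Poly_Mapping.keys q)) (Poly_Mapping.keys p)"
    using words
    by (intro vsum_cong) (simp add: weval_append smult_mult_left smult_mult_right smult_smult mult.commute)
  also have "\<dots> = ev A a p \<otimes> ev A a q"
    using words unfolding ev_def
    by (simp add: vsum_mult_left vsum_mult_right vsum_closed cong: vsum_cong)
  finally show ?thesis .
qed

lemma ev_tword: "I \<in> idx n l \<Longrightarrow> J \<in> idx n m \<Longrightarrow> ev A a (tword I J) = weval A a (zip I J)"
  unfolding tword_def by (simp add: ev_single tc_word_zip)

lemma ev_tc_ideal:
  assumes "G \<subseteq> tc_carrier n" "\<And>g. g \<in> G \<Longrightarrow> ev A a g = \<zero>" "r \<in> tc_ideal n G"
  shows "ev A a r = \<zero>"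
proof -
  have carrier: "\<And>u. u \<in> tc_ideal n G \<Longrightarrow> u \<in> tc_carrier n"
    using tc_ideal_subset_tc_carrier[OF assms(1)] by blast
  from assms(3) show ?thesis
    by induction (simp_all add: assms(2) carrier ev_add ev_smult ev_tc_mul)
qed

lemma counit_weval: "tc_word n w \<Longrightarrow> \<epsilon> (weval A a w) = (if \<forall>ij\<in>set w. fst ij = snd ij then 1 else 0)"
proof (induction w)
  case (Cons ij w)
  then show ?case
    by (cases ij) (auto simp: counit_mult counit_coeff; force)
qed (simp add: counit_one)

lemma counit_ev: "p \<in> tc_carrier n \<Longrightarrow> \<epsilon> (ev A a p) = tc_counit p"
  unfolding ev_def tc_counit_def
  by (auto simp: counit_vsum in_tc_carrier_iff counit_smult counit_weval intro!: sum.cong)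

text \<open>The coproduct of the word \<open>w\<close> in TC, mapped to \<open>A \<otimes> A\<close> by \<open>weval \<otimes> weval\<close>.\<close>

definition weval_comult :: "(nat \<times> nat) list \<Rightarrow> ('a \<times> 'a) \<Rightarrow>\<^sub>0 'k" where
  "weval_comult w = (\<Sum>ks\<in>idx n (length w).
     Poly_Mapping.single (weval A a (zip (map fst w) ks), weval A a (zip ks (map snd w))) 1)"

lemma weval_comult_Cons:
  "tmult A (\<Sum>k<n. Poly_Mapping.single (a i k, a k j) 1) (weval_comult w) = weval_comult ((i, j) # w)"
proof -
  let ?t = "\<lambda>k ks. Poly_Mapping.single
              (a i k \<otimes> weval A a (zip (map fst w) ks), a k j \<otimes> weval A a (zip ks (map snd w))) (1::'k)"
  have "tmult A (\<Sum>k<n. Poly_Mapping.single (a i k, a k j) 1) (weval_comult w)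
      = (\<Sum>k<n. \<Sum>ks\<in>idx n (length w). ?t k ks)"
    unfolding weval_comult_def tmult_eq_pm_bilinear
    by (simp add: pm_bilinear_sum_left pm_bilinear_sum_right pm_bilinear_single) (rule sum.swap)
  also have "\<dots> = (\<Sum>(k, ks)\<in>{..<n} \<times> idx n (length w). ?t k ks)"
    by (simp add: sum.cartesian_product)
  also have "\<dots> = weval_comult ((i, j) # w)"
    unfolding weval_comult_def by (simp add: idx_Suc sum.reindex inj_on_def split_def)
  finally show ?thesis .
qed

lemma comult_weval: "tc_word n w \<Longrightarrow> teq2 A (\<Delta> (weval A a w)) (weval_comult w)"
proof (induction w)
  case Nil
  then show ?case by (simp add: weval_comult_def comult_one)
next
  case (Cons ij w)
  obtain i j where ij: "ij = (i, j)" by (cases ij)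
  with Cons.prems have ok: "i < n" "j < n" "tc_word n w" by auto
  have keys: "Poly_Mapping.keys (\<Sum>k<n. Poly_Mapping.single (a i k, a k j) (1::'k)) \<subseteq> carrier \<times> carrier"
    using ok by (intro order.trans[OF keys_sum]) auto
  have "teq2 A (\<Delta> (weval A a (ij # w))) (tmult A (\<Delta> (a i j)) (\<Delta> (weval A a w)))"
    using ok ij by (simp add: comult_mult)
  also have "teq2 A \<dots> (tmult A (\<Sum>k<n. Poly_Mapping.single (a i k, a k j) 1) (weval_comult w))"
    using ok Cons.IH keys by (intro teq2_tmult comult_coeff keys_comult) auto
  finally show ?case
    by (simp add: ij weval_comult_Cons)
qed

lemma comult_ev:
  assumes p: "p \<in> tc_carrier n"
  shows "teq2 A (\<Delta> (ev A a p)) (tmap2 (ev A a) (ev A a) (tc_comult n p))"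
proof -
  have words: "\<And>w. w \<in> Poly_Mapping.keys p \<Longrightarrow> tc_word n w"
    using p by (auto simp: in_tc_carrier_iff)
  have "teq2 A (\<Delta> (ev A a p)) (\<Sum>w\<in>Poly_Mapping.keys p. \<Delta> (Poly_Mapping.lookup p w \<cdot> weval A a w))"
    unfolding ev_def using words by (intro comult_vsum) auto
  also have "teq2 A \<dots> (\<Sum>w\<in>Poly_Mapping.keys p. pm_smult (Poly_Mapping.lookup p w) (weval_comult w))"
    using words by (intro teq2_sum teq2_trans[OF comult_smult teq2_smult[OF comult_weval]]) auto
  also have "\<dots> = tmap2 (ev A a) (ev A a) (tc_comult n p)"
  proof -
    have "ev A a (tword (map fst w) ks) = weval A a (zip (map fst w) ks)
        \<and> ev A a (tword ks (map snd w)) = weval A a (zip ks (map snd w))"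
      if "w \<in> Poly_Mapping.keys p" "ks \<in> idx n (length w)" for w ks
      using tc_word_idx[OF words[OF that(1)]] that(2) by (auto intro: ev_tword)
    then show ?thesis
      unfolding tc_comult_def weval_comult_def
      by (simp add: tmap2_sum tmap2_single pm_smult_sum pm_smult_single)
  qed
  finally show ?thesis .
qed

end

section \<open>The quotient bialgebra A(F)\<close>

lemma ideal_gen_in_tc_carrier:
  "I \<in> idx n p \<Longrightarrow> K \<in> idx n q \<Longrightarrow> ideal_gen n p q f I K \<in> tc_carrier n"
  unfolding ideal_gen_def
  by (intro tc_carrier_diff tc_carrier_sum tc_carrier_smult tc_carrier_tword) auto

locale tc_quotient =
  fixes n :: nat and nin mout :: "'i \<Rightarrow> nat" and fm :: "'i \<Rightarrow> nat list \<Rightarrow> nat list \<Rightarrow> 'k::field"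
begin

abbreviation "I_F \<equiv> IF n nin mout fm"
abbreviation "A_F \<equiv> AF n nin mout fm"

lemma AF_simps:
  "b_carrier A_F = {coset I_F p | p. p \<in> tc_carrier n}"
  "b_add A_F X Y = coset I_F (rep X + rep Y)"
  "b_smult A_F c X = coset I_F (pm_smult c (rep X))"
  "b_mult A_F X Y = coset I_F (tc_mul (rep X) (rep Y))"
  "b_one A_F = coset I_F tc_one"
  "b_comult A_F X = tmap2 (coset I_F) (coset I_F) (tc_comult n (rep X))"
  "b_counit A_F X = tc_counit (rep X)"
  by (simp_all add: AF_def Let_def)

lemma IF_zero: "0 \<in> I_F"
  and IF_add: "r \<in> I_F \<Longrightarrow> r' \<in> I_F \<Longrightarrow> r + r' \<in> I_F"
  and IF_smult: "r \<in> I_F \<Longrightarrow> pm_smult c r \<in> I_F"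
  and IF_mul_left: "x \<in> tc_carrier n \<Longrightarrow> r \<in> I_F \<Longrightarrow> tc_mul x r \<in> I_F"
  and IF_mul_right: "x \<in> tc_carrier n \<Longrightarrow> r \<in> I_F \<Longrightarrow> tc_mul r x \<in> I_F"
  unfolding IF_def by (simp_all add: tc_ideal.intros)

lemma IF_diff: "r \<in> I_F \<Longrightarrow> r' \<in> I_F \<Longrightarrow> r - r' \<in> I_F"
  using IF_add[of r "pm_smult (-1) r'"] IF_smult[of r' "-1"] by (simp add: pm_smult_minus_one)

lemma IF_subset_tc_carrier: "I_F \<subseteq> tc_carrier n"
  unfolding IF_def by (rule tc_ideal_subset_tc_carrier) (auto intro: ideal_gen_in_tc_carrier)

lemma coset_add_IF:
  assumes r: "r \<in> I_F"
  shows "coset I_F (p + r) = coset I_F p"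
proof (intro equalityI subsetI)
  fix x assume "x \<in> coset I_F (p + r)"
  then obtain r' where "r' \<in> I_F" "x = p + (r + r')"
    unfolding coset_def by (auto simp: add.assoc)
  with r show "x \<in> coset I_F p"
    unfolding coset_def by (blast intro: IF_add)
next
  fix x assume "x \<in> coset I_F p"
  then obtain r' where "r' \<in> I_F" "x = (p + r) + (r' - r)"
    unfolding coset_def by auto
  with r show "x \<in> coset I_F (p + r)"
    unfolding coset_def by (blast intro: IF_diff)
qed

lemma rep_coset: "\<exists>r\<in>I_F. rep (coset I_F p) = p + r"
proof -
  have "p \<in> coset I_F p"
    unfolding coset_def using IF_zero by force
  then have "rep (coset I_F p) \<in> coset I_F p"
    unfolding rep_def by (rule someI)
  then show ?thesis
    unfolding coset_def by blast
qed

lemma rep_coset_in_tc_carrier: "p \<in> tc_carrier n \<Longrightarrow> rep (coset I_F p) \<in> tc_carrier n"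
  using rep_coset[of p] IF_subset_tc_carrier by (auto intro!: tc_carrier_add)

lemma coset_in_AF: "p \<in> tc_carrier n \<Longrightarrow> coset I_F p \<in> b_carrier A_F"
  by (auto simp: AF_simps)

lemma AF_add_coset: "b_add A_F (coset I_F p) (coset I_F q) = coset I_F (p + q)"
proof -
  obtain r r' where "r \<in> I_F" "rep (coset I_F p) = p + r" "r' \<in> I_F" "rep (coset I_F q) = q + r'"
    using rep_coset[of p] rep_coset[of q] by blast
  then show ?thesis
    using coset_add_IF[OF IF_add, of r r' "p + q"] by (simp add: AF_simps add_ac)
qed

lemma AF_smult_coset: "b_smult A_F c (coset I_F p) = coset I_F (pm_smult c p)"
proof -
  obtain r where "r \<in> I_F" "rep (coset I_F p) = p + r"
    using rep_coset by blast
  then show ?thesis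
    by (simp add: AF_simps pm_smult_add coset_add_IF IF_smult)
qed

lemma AF_mult_coset:
  assumes "p \<in> tc_carrier n" "q \<in> tc_carrier n"
  shows "b_mult A_F (coset I_F p) (coset I_F q) = coset I_F (tc_mul p q)"
proof -
  obtain r r' where r: "r \<in> I_F" "rep (coset I_F p) = p + r"
    and r': "r' \<in> I_F" "rep (coset I_F q) = q + r'"
    using rep_coset by blast
  have "tc_mul (rep (coset I_F p)) (rep (coset I_F q)) = tc_mul p q + (tc_mul r (q + r') + tc_mul p r')"
    using r(2) r'(2) by (simp add: tc_mul_eq_pm_bilinear pm_bilinear_add_left pm_bilinear_add_right add_ac)
  moreover have "tc_mul r (q + r') + tc_mul p r' \<in> I_F"
    using r(1) r'(1) assms IF_subset_tc_carrier
    by (intro IF_add IF_mul_left IF_mul_right tc_carrier_add) auto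
  ultimately show ?thesis
    by (simp add: AF_simps coset_add_IF)
qed

lemma AF_t_eq_coset: "AF_t n nin mout fm i j = coset I_F (Poly_Mapping.single [(i, j)] 1)"
  by (simp add: AF_t_def tword_def)

end

locale comodule_quotient =
  comodule_matrix A n a + tc_quotient n nin mout fm
  for A :: "('k::field, 'a) bialg" and n a nin mout and fm :: "'i \<Rightarrow> nat list \<Rightarrow> nat list \<Rightarrow> 'k"
begin

context
  fixes \<pi> :: "'k tc set \<Rightarrow> 'a"
  assumes hom: "bialg_hom A_F A \<pi>"
    and gens: "\<forall>i<n. \<forall>j<n. \<pi> (AF_t n nin mout fm i j) = a i j"
begin

lemma hom_closed: "X \<in> b_carrier A_F \<Longrightarrow> \<pi> X \<in> carrier"
  and hom_add: "X \<in> b_carrier A_F \<Longrightarrow> Y \<in> b_carrier A_F \<Longrightarrow> \<pi> (b_add A_F X Y) = \<pi> X \<oplus> \<pi> Y"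
  and hom_smult: "X \<in> b_carrier A_F \<Longrightarrow> \<pi> (b_smult A_F c X) = c \<cdot> \<pi> X"
  and hom_mult: "X \<in> b_carrier A_F \<Longrightarrow> Y \<in> b_carrier A_F \<Longrightarrow> \<pi> (b_mult A_F X Y) = \<pi> X \<otimes> \<pi> Y"
  and hom_one: "\<pi> (b_one A_F) = \<one>"
  using hom by (simp_all add: bialg_hom_def)

lemma hom_coset_single: "tc_word n w \<Longrightarrow> \<pi> (coset I_F (Poly_Mapping.single w c)) = c \<cdot> weval A a w"
proof -
  assume w: "tc_word n w"
  have "\<pi> (coset I_F (Poly_Mapping.single w 1)) = weval A a w"
    using w
  proof (induction w)
    case Nil
    then show ?case using hom_one by (simp add: AF_simps tc_one_def)
  next
    case (Cons ij w)
    obtain i j where ij: "ij = (i, j)" by (cases ij)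
    with Cons.prems have ok: "i < n" "j < n" "tc_word n w" by auto
    have "coset I_F (Poly_Mapping.single (ij # w) 1)
        = b_mult A_F (AF_t n nin mout fm i j) (coset I_F (Poly_Mapping.single w 1))"
      using ok by (simp add: AF_t_eq_coset AF_mult_coset tc_carrier_single tc_mul_eq_pm_bilinear
                             pm_bilinear_single ij)
    with ok Cons.IH gens show ?case
      by (simp add: hom_mult AF_t_eq_coset coset_in_AF tc_carrier_single ij)
  qed
  moreover have "coset I_F (Poly_Mapping.single w c) = b_smult A_F c (coset I_F (Poly_Mapping.single w 1))"
    by (simp add: AF_smult_coset pm_smult_single)
  ultimately show ?thesis
    using w by (simp add: hom_smult coset_in_AF tc_carrier_single)
qed

lemma hom_coset_eq_ev:
  assumes "p \<in> tc_carrier n"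
  shows "\<pi> (coset I_F p) = ev A a p"
proof -
  let ?part = "\<lambda>S. \<Sum>w\<in>S. Poly_Mapping.single w (Poly_Mapping.lookup p w)"
  have words: "\<And>w. w \<in> Poly_Mapping.keys p \<Longrightarrow> tc_word n w"
    using assms by (simp add: in_tc_carrier_iff)
  have "\<pi> (coset I_F (?part S)) = ev A a (?part S)" if "S \<subseteq> Poly_Mapping.keys p" for S
  proof -
    have "finite S"
      using that by (rule finite_subset) simp
    then show ?thesis
      using that
    proof (induction S rule: finite_induct)
      case empty
      have "\<pi> (coset I_F 0) = \<pi> (b_smult A_F 0 (coset I_F 0))"
        by (simp add: AF_smult_coset)
      also have "\<dots> = \<zero>"
        using hom_closed[OF coset_in_AF[OF tc_carrier_zero]] by (simp add: hom_smult coset_in_AF)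
      finally show ?case
        by simp
    next
      case (insert w S)
      let ?m = "Poly_Mapping.single w (Poly_Mapping.lookup p w)"
      have carrier: "?m \<in> tc_carrier n" "?part S \<in> tc_carrier n"
        using insert.prems words by (auto intro!: tc_carrier_single tc_carrier_sum)
      have "\<pi> (coset I_F (?part (insert w S))) = \<pi> (b_add A_F (coset I_F ?m) (coset I_F (?part S)))"
        using insert.hyps by (simp add: AF_add_coset)
      also have "\<dots> = \<pi> (coset I_F ?m) \<oplus> \<pi> (coset I_F (?part S))"
        using carrier by (simp add: hom_add coset_in_AF)
      also have "\<dots> = ev A a (?part (insert w S))"
        using insert carrier words by (simp add: hom_coset_single ev_add ev_single)
      finally show ?case .
    qed
  qed
  from this[of "Poly_Mapping.keys p"] show ?thesis
    by (simp add: sum_single_lookup)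
qed

end

end

locale colinear_family =
  comodule_quotient A n a nin mout fm
  for A :: "('k::field, 'a) bialg" and n a nin mout and fm :: "'i \<Rightarrow> nat list \<Rightarrow> nat list \<Rightarrow> 'k" +
  assumes colinear: "\<forall>i. colinear A n a (nin i) (mout i) (fm i)"
begin

lemma ev_ideal_gen:
  assumes I: "I \<in> idx n (nin i)" and K: "K \<in> idx n (mout i)"
  shows "ev A a (ideal_gen n (nin i) (mout i) (fm i) I K) = \<zero>"
proof -
  define X where "X = (\<Sum>J\<in>idx n (nin i). pm_smult (fm i J K) (tword I J))"
  define Y where "Y = (\<Sum>J\<in>idx n (mout i). pm_smult (fm i I J) (tword J K))"
  have carrier: "X \<in> tc_carrier n" "Y \<in> tc_carrier n"
    unfolding X_def Y_def using I K by (auto intro!: tc_carrier_sum tc_carrier_smult tc_carrier_tword)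
  have "ev A a X = vsum A (\<lambda>J. fm i J K \<cdot> aprod A a I J) (idx n (nin i))"
    unfolding X_def using I
    by (simp add: ev_sum tc_carrier_smult tc_carrier_tword ev_smult ev_tword aprod_eq_weval cong: vsum_cong)
  also have "\<dots> = vsum A (\<lambda>J. fm i I J \<cdot> aprod A a J K) (idx n (mout i))"
    using colinear I K by (simp add: colinear_def)
  also have "\<dots> = ev A a Y"
    unfolding Y_def using K
    by (simp add: ev_sum tc_carrier_smult tc_carrier_tword ev_smult ev_tword aprod_eq_weval cong: vsum_cong)
  finally have "ev A a X = ev A a Y" .
  then show ?thesis
    using carrier by (simp add: ideal_gen_def X_def[symmetric] Y_def[symmetric] ev_diff add_neg)
qed

lemma ev_IF: "r \<in> I_F \<Longrightarrow> ev A a r = \<zero>"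
  unfolding IF_def by (rule ev_tc_ideal) (auto intro: ideal_gen_in_tc_carrier ev_ideal_gen)

definition ev_AF :: "'k tc set \<Rightarrow> 'a" where
  "ev_AF X = ev A a (rep X)"

lemma ev_AF_coset: "p \<in> tc_carrier n \<Longrightarrow> ev_AF (coset I_F p) = ev A a p"
  using rep_coset[of p] IF_subset_tc_carrier by (auto simp: ev_AF_def ev_add ev_IF)

lemma ev_AF_gens: "i < n \<Longrightarrow> j < n \<Longrightarrow> ev_AF (AF_t n nin mout fm i j) = a i j"
  by (simp add: AF_t_eq_coset ev_AF_coset tc_carrier_single ev_single)

lemma ev_AF_bialg_hom: "bialg_hom A_F A ev_AF"
  unfolding bialg_hom_def
proof (intro conjI ballI allI)
  fix X assume "X \<in> b_carrier A_F"
  then obtain p where p: "p \<in> tc_carrier n" "X = coset I_F p"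
    by (auto simp: AF_simps)
  show "ev_AF X \<in> carrier"
    using p by (simp add: ev_AF_coset)
  show "\<epsilon> (ev_AF X) = b_counit A_F X"
    using p by (simp add: ev_AF_def AF_simps counit_ev rep_coset_in_tc_carrier)
  have "tmap2 ev_AF ev_AF (b_comult A_F X) = tmap2 (ev A a) (ev A a) (tc_comult n (rep X))"
    unfolding AF_simps tmap2_comp
    using keys_tc_comult[OF rep_coset_in_tc_carrier] p by (intro tmap2_cong) (auto simp: ev_AF_coset)
  then show "teq2 A (\<Delta> (ev_AF X)) (tmap2 ev_AF ev_AF (b_comult A_F X))"
    using comult_ev[OF rep_coset_in_tc_carrier] p by (simp add: ev_AF_def)
  fix Y assume "Y \<in> b_carrier A_F"
  then obtain q where q: "q \<in> tc_carrier n" "Y = coset I_F q"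
    by (auto simp: AF_simps)
  show "ev_AF (b_add A_F X Y) = ev_AF X \<oplus> ev_AF Y"
    using p q by (simp add: AF_add_coset ev_AF_coset tc_carrier_add ev_add)
  show "ev_AF (b_mult A_F X Y) = ev_AF X \<otimes> ev_AF Y"
    using p q by (simp add: AF_mult_coset ev_AF_coset tc_carrier_mul ev_tc_mul)
next
  fix c X assume "X \<in> b_carrier A_F"
  then obtain p where "p \<in> tc_carrier n" "X = coset I_F p"
    by (auto simp: AF_simps)
  then show "ev_AF (b_smult A_F c X) = c \<cdot> ev_AF X"
    by (simp add: AF_smult_coset ev_AF_coset tc_carrier_smult ev_smult)
next
  show "ev_AF (b_one A_F) = \<one>"
    by (simp add: AF_simps tc_one_def ev_AF_coset tc_carrier_single ev_single)
qed

end

theorem mainTheorem2: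
  fixes n :: nat
    and nin mout :: "'i \<Rightarrow> nat"
    and fm :: "'i \<Rightarrow> nat list \<Rightarrow> nat list \<Rightarrow> 'k::field"
    and A :: "('k, 'a) bialg"
    and a :: "nat \<Rightarrow> nat \<Rightarrow> 'a"
  assumes "is_bialgebra A"
    and "comodule_mat A n a"
    and "\<forall>i. colinear A n a (nin i) (mout i) (fm i)"
  shows "\<exists>\<pi>. bialg_hom (AF n nin mout fm) A \<pi>
            \<and> (\<forall>i<n. \<forall>j<n. \<pi> (AF_t n nin mout fm i j) = a i j)
            \<and> (\<forall>\<pi>'. bialg_hom (AF n nin mout fm) A \<pi>'
                   \<and> (\<forall>i<n. \<forall>j<n. \<pi>' (AF_t n nin mout fm i j) = a i j)
                   \<longrightarrow> (\<forall>X\<in>b_carrier (AF n nin mout fm). \<pi>' X = \<pi> X))"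
proof -
  interpret colinear_family A n a nin mout fm
    using assms by unfold_locales auto
  have unique: "\<pi>' X = ev_AF X"
    if "bialg_hom A_F A \<pi>'" "\<forall>i<n. \<forall>j<n. \<pi>' (AF_t n nin mout fm i j) = a i j" "X \<in> b_carrier A_F"
    for \<pi>' X
    using that(3) hom_coset_eq_ev[OF that(1,2)] by (auto simp: AF_simps ev_AF_coset)
  show ?thesis
    using ev_AF_bialg_hom ev_AF_gens unique by blast
qed

end
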